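(* Let $N,\mu,\beta,\sigma,\gamma,p>0$ and $0<\rho<1$ and consider the system $$S'=\mu N-\tfrac{\beta(1-\rho)}{N}SI-\tfrac{p}{N}S-\mu S,\qquad E'=\tfrac{\beta(1-\rho)}{N}SI-(\sigma+\mu)E,\qquad I'=\sigma E-(\gamma+\mu)I$$ on $\Omega=\{(S,E,I)\in\mathbb{R}_+^3: S+E+I\le N\}$. Let $\mathcal{R}_0=\dfrac{\mu N\sigma\beta(1-\rho)}{(\sigma+\mu)(\gamma+\mu)(p+\mu N)}$. If $\mathcal{R}_0>1$, then the endemic equilibrium $(S^e,E^e,I^e)$, with $$S^e=\frac{(\sigma+\mu)(\gamma+\mu)N}{\sigma\beta(1-\rho)},\quad I^e=\frac{\mu N\sigma\beta(1-\rho)-(\sigma+\mu)(\gamma+\mu)(p+\mu N)}{(\sigma+\mu)(\gamma+\mu)\beta(1-\rho)},\quad E^e=\frac{\gamma+\mu}{\sigma}I^e,$$ is globally asymptotically stable in the interior of $\Omega$.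
   Context: Global asymptotic stability in the interior of $\Omega$: the equilibrium is stable and every solution starting in the interior of $\Omega$ converges to it as $t\to+\infty$. *)

theory Defs
  imports "HOL-Analysis.Analysis"
begin

definition Omega :: "real \<Rightarrow> (real \<times> real \<times> real) set" where
  "Omega N = {(s, e, i). 0 \<le> s \<and> 0 \<le> e \<and> 0 \<le> i \<and> s + e + i \<le> N}"

definition seir_field ::
  "real \<Rightarrow> real \<Rightarrow> real \<Rightarrow> real \<Rightarrow> real \<Rightarrow> real \<Rightarrow> real \<Rightarrow>
   real \<times> real \<times> real \<Rightarrow> real \<times> real \<times> real" where
  "seir_field N \<mu> \<beta> \<sigma> \<gamma> p \<rho> x =
     (case x of (s, e, i) \<Rightarrow>
       (\<mu> * N - \<beta> * (1 - \<rho>) / N * s * i - p / N * s - \<mu> * s,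
        \<beta> * (1 - \<rho>) / N * s * i - (\<sigma> + \<mu>) * e,
        \<sigma> * e - (\<gamma> + \<mu>) * i))"

definition is_forward_solution ::
  "('a::real_normed_vector \<Rightarrow> 'a) \<Rightarrow> (real \<Rightarrow> 'a) \<Rightarrow> bool" where
  "is_forward_solution f x \<longleftrightarrow>
     (\<forall>t\<ge>0. (x has_vector_derivative f (x t)) (at t within {0..}))"

definition globally_asymptotically_stable_in ::
  "('a::real_normed_vector \<Rightarrow> 'a) \<Rightarrow> 'a set \<Rightarrow> 'a \<Rightarrow> bool" where
  "globally_asymptotically_stable_in f D xe \<longleftrightarrow>
     (\<forall>\<epsilon>>0. \<exists>\<delta>>0. \<forall>x. is_forward_solution f x \<and> x 0 \<in> D \<and> dist (x 0) xe < \<delta>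
            \<longrightarrow> (\<forall>t\<ge>0. dist (x t) xe < \<epsilon>)) \<and>
     (\<forall>x. is_forward_solution f x \<and> x 0 \<in> D \<longrightarrow> (x \<longlongrightarrow> xe) at_top)"

end

theory Submission
  imports Defs
begin

text \<open>
  With the Volterra function \<open>volterra a u = u - a - a ln (u / a)\<close>, the Korobeinikov-type function
  \<open>V = volterra Se S + volterra Ee E + (a1 / \<sigma>) volterra Ie I\<close> has orbital derivative \<open>-W\<close>,
  where \<open>W \<ge> m (S - Se)\<^sup>2 / S \<ge> 0\<close> by the AM-GM inequality for three numbers with product 1.
  The sublevel sets of \<open>V\<close> in the open orthant are compact, so solutions stay positive and
  bounded, and smallness of \<open>V\<close> forces closeness to the equilibrium: this is Lyapunov stability.
  Along a solution \<open>V\<close> converges and the trajectory is uniformly continuous, so by Barbalat's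
  lemma \<open>W \<rightarrow> 0\<close>, whence \<open>S \<rightarrow> Se\<close>; Barbalat's lemma applied to \<open>S\<close> and then to \<open>I\<close>
  gives \<open>S' \<rightarrow> 0\<close> and \<open>I' \<rightarrow> 0\<close>, which force \<open>I \<rightarrow> Ie\<close> and \<open>E \<rightarrow> Ee\<close>.
\<close>

section \<open>The Volterra function\<close>

definition volterra :: "real \<Rightarrow> real \<Rightarrow> real" where
  "volterra a u = u - a - a * ln (u / a)"

lemma volterra_nonneg:
  assumes "a > 0" "u > 0"
  shows "0 \<le> volterra a u"
proof -
  have "a * ln (u / a) \<le> a * (u / a - 1)"
    using assms by (intro mult_left_mono ln_le_minus_one) auto
  also have "\<dots> = u - a"
    using assms by (simp add: field_simps)
  finally show ?thesis
    by (simp add: volterra_def)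
qed

lemma sqrt_dist_le_volterra:
  assumes "a > 0" "u > 0"
  shows "(sqrt u - sqrt a)\<^sup>2 \<le> volterra a u"
proof -
  have "ln (u / a) = 2 * ln (sqrt (u / a))"
    using assms by (simp add: ln_sqrt)
  also have "\<dots> \<le> 2 * (sqrt (u / a) - 1)"
    using assms ln_le_minus_one[of "sqrt (u / a)"] by simp
  finally have "a * ln (u / a) \<le> a * (2 * (sqrt (u / a) - 1))"
    using assms by (intro mult_left_mono) auto
  also have "\<dots> = 2 * sqrt a * sqrt u - 2 * a"
    using assms by (simp add: real_sqrt_divide field_simps)
  finally show ?thesis
    using assms by (simp add: volterra_def power2_eq_square algebra_simps)
qed

lemma volterra_sublevel_subset:
  assumes "a > 0"
  shows "{u. 0 < u \<and> volterra a u \<le> C} \<subseteq> {a * exp (- (C + a) / a) .. (sqrt a + sqrt C)\<^sup>2}"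
proof
  fix u assume "u \<in> {u. 0 < u \<and> volterra a u \<le> C}"
  then have u: "0 < u" "volterra a u \<le> C" by auto
  have "- (C + a) / a \<le> ln (u / a)"
    using assms u by (simp add: volterra_def field_simps)
  then have "exp (- (C + a) / a) \<le> u / a"
    using assms u by (metis divide_pos_pos exp_le_cancel_iff exp_ln)
  then have lower: "a * exp (- (C + a) / a) \<le> u"
    using assms by (simp add: field_simps)
  have "(sqrt u - sqrt a)\<^sup>2 \<le> C"
    using sqrt_dist_le_volterra[OF assms u(1)] u(2) by linarith
  then have "sqrt u \<le> sqrt a + sqrt C"
    using real_le_rsqrt by fastforce
  then have "(sqrt u)\<^sup>2 \<le> (sqrt a + sqrt C)\<^sup>2"
    using u(1) by (intro power_mono) auto
  then show "u \<in> {a * exp (- (C + a) / a) .. (sqrt a + sqrt C)\<^sup>2}"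
    using u(1) lower by simp
qed

lemma dist_le_of_volterra_le:
  assumes "a > 0" "u > 0" "volterra a u \<le> \<eta>"
  shows "\<bar>u - a\<bar> \<le> sqrt \<eta> * (2 * sqrt a + sqrt \<eta>)"
proof -
  define d where "d = sqrt u - sqrt a"
  have "sqrt (d\<^sup>2) \<le> sqrt \<eta>"
    using sqrt_dist_le_volterra[OF assms(1,2)] assms(3) unfolding d_def
    by (intro real_sqrt_le_mono) linarith
  then have d: "\<bar>d\<bar> \<le> sqrt \<eta>"
    by simp
  have "0 \<le> \<eta>"
    using volterra_nonneg[OF assms(1,2)] assms(3) by linarith
  have "u - a = d * (d + 2 * sqrt a)"
    using assms by (simp add: d_def algebra_simps)
  then have "\<bar>u - a\<bar> = \<bar>d\<bar> * \<bar>d + 2 * sqrt a\<bar>"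
    by (simp add: abs_mult)
  also have "\<dots> \<le> \<bar>d\<bar> * (\<bar>d\<bar> + 2 * sqrt a)"
    using abs_triangle_ineq[of d "2 * sqrt a"] assms by (intro mult_left_mono) auto
  also have "\<dots> \<le> sqrt \<eta> * (sqrt \<eta> + 2 * sqrt a)"
    using d \<open>0 \<le> \<eta>\<close> assms(1) by (intro mult_mono add_right_mono) auto
  finally show ?thesis
    by (simp add: add.commute)
qed

lemma volterra_has_real_derivative:
  assumes "a > 0" "u > 0"
  shows "(volterra a has_real_derivative 1 - a / u) (at u within X)"
  unfolding volterra_def[abs_def] using assms
  by (auto intro!: derivative_eq_intros simp: field_simps)

lemma three_le_sum_if_prod_eq_one:
  fixes u v w :: real
  assumes "u > 0" "v > 0" "w > 0" "u * v * w = 1"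
  shows "3 \<le> u + v + w"
proof -
  have "ln u + ln v + ln w = ln (u * v * w)"
    using assms(1-3) by (simp add: ln_mult)
  then have "ln u + ln v + ln w = 0"
    using assms(4) by simp
  moreover have "ln u \<le> u - 1" "ln v \<le> v - 1" "ln w \<le> w - 1"
    using assms by (auto intro: ln_le_minus_one)
  ultimately show ?thesis
    by linarith
qed

section \<open>Calculus on the half-line\<close>

lemma mvt_within_atLeast:
  fixes g g' :: "real \<Rightarrow> real"
  assumes "0 \<le> a" "a < b"
    and g: "\<And>t. a \<le> t \<Longrightarrow> t \<le> b \<Longrightarrow> (g has_real_derivative g' t) (at t within {0..})"
  shows "\<exists>z\<in>{a<..<b}. g b - g a = (b - a) * g' z"
proof -
  have "(g has_derivative (*) (g' t)) (at t within {a..b})" if "a \<le> t" "t \<le> b" for t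
    by (rule has_derivative_subset[OF g[OF that, unfolded has_field_derivative_def]])
      (use assms(1) in auto)
  from mvt_simple[OF \<open>a < b\<close> this] show ?thesis
    by (auto simp: mult.commute)
qed

lemma has_real_derivative_nonpos_imp_nonincreasing:
  fixes g g' :: "real \<Rightarrow> real"
  assumes "0 \<le> a" "a \<le> b"
    and "\<And>t. a \<le> t \<Longrightarrow> t \<le> b \<Longrightarrow> (g has_real_derivative g' t) (at t within {0..})"
    and "\<And>t. a \<le> t \<Longrightarrow> t \<le> b \<Longrightarrow> g' t \<le> 0"
  shows "g b \<le> g a"
proof (cases "a = b")
  case False
  then have "a < b"
    using assms(2) by simp
  then obtain z where "z \<in> {a<..<b}" "g b - g a = (b - a) * g' z"
    using mvt_within_atLeast[OF assms(1) _ assms(3)] by blast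
  then show ?thesis
    using assms(4)[of z] mult_nonneg_nonpos[of "b - a" "g' z"] by auto
qed simp

lemma antimono_tendsto_Inf:
  fixes g :: "real \<Rightarrow> real"
  assumes mono: "\<And>s t. 0 \<le> s \<Longrightarrow> s \<le> t \<Longrightarrow> g t \<le> g s"
    and bdd: "bdd_below (g ` {0..})"
  shows "(g \<longlongrightarrow> Inf (g ` {0..})) at_top"
proof (rule decreasing_tendsto)
  show "\<forall>\<^sub>F t in at_top. Inf (g ` {0..}) \<le> g t"
    using bdd by (auto intro!: cInf_lower eventually_at_top_linorderI[of 0])
  fix y assume "Inf (g ` {0..}) < y"
  then obtain s where "0 \<le> s" "g s < y"
    using cInf_lessD[of "g ` {0..}" y] by auto
  then show "\<forall>\<^sub>F t in at_top. g t < y"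
    using mono by (intro eventually_at_top_linorderI[of s]) (meson le_less_trans)
qed

lemma barbalat:
  fixes g g' :: "real \<Rightarrow> real"
  assumes g: "\<And>t. 0 \<le> t \<Longrightarrow> (g has_real_derivative g' t) (at t within {0..})"
    and lim: "(g \<longlongrightarrow> L) at_top"
    and uc: "uniformly_continuous_on {0..} g'"
  shows "(g' \<longlongrightarrow> 0) at_top"
proof (rule tendstoI)
  fix e :: real assume "e > 0"
  then obtain d where d: "d > 0"
    and close: "\<And>s t. 0 \<le> s \<Longrightarrow> 0 \<le> t \<Longrightarrow> dist s t < d \<Longrightarrow> dist (g' s) (g' t) < e / 2"
    using uc unfolding uniformly_continuous_on_def by (metis atLeast_iff half_gt_zero)
  have "\<forall>\<^sub>F t in at_top. dist (g t) L < e * d / 8"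
    using \<open>e > 0\<close> d by (intro tendstoD[OF lim]) simp
  then obtain T where T: "\<And>t. t \<ge> T \<Longrightarrow> dist (g t) L < e * d / 8"
    unfolding eventually_at_top_linorder by blast
  show "\<forall>\<^sub>F t in at_top. dist (g' t) 0 < e"
  proof (rule eventually_at_top_linorderI[of "max T 0"])
    fix t assume t: "max T 0 \<le> t"
    obtain z where z: "z \<in> {t<..<t + d / 2}" "g (t + d / 2) - g t = d / 2 * g' z"
      using mvt_within_atLeast[of t "t + d / 2" g g'] g t d by auto
    have "\<bar>g (t + d / 2) - g t\<bar> < e * d / 4"
      using T[of t] T[of "t + d / 2"] t d unfolding dist_real_def by arith
    then have "\<bar>g' z\<bar> < e / 2"
      using z(2) d by (simp add: abs_mult)
    moreover have "dist (g' t) (g' z) < e / 2"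
      using close[of t z] z t d by (simp add: dist_real_def)
    ultimately show "dist (g' t) 0 < e"
      unfolding dist_real_def by arith
  qed
qed

lemma stays_in_open_if_trapped:
  fixes x :: "real \<Rightarrow> 'a::topological_space"
  assumes cont: "continuous_on {0..} x" and "open U" "x 0 \<in> U"
    and trap: "\<And>T. T > 0 \<Longrightarrow> (\<forall>t\<in>{0..<T}. x t \<in> U) \<Longrightarrow>
                 \<exists>K. closed K \<and> K \<subseteq> U \<and> (\<forall>t\<in>{0..<T}. x t \<in> K)"
    and "t \<ge> 0"
  shows "x t \<in> U"
proof (rule ccontr)
  define B where "B = {0..} \<inter> x -` (- U)"
  assume "x t \<notin> U"
  then have "B \<noteq> {}"
    using \<open>t \<ge> 0\<close> by (auto simp: B_def)
  moreover have "closed B"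
    unfolding B_def using cont \<open>open U\<close> by (intro continuous_closed_preimage) (auto simp: closed_atLeast)
  moreover have "bdd_below B"
    by (auto simp: B_def bdd_below_def)
  ultimately have "Inf B \<in> B"
    using closed_contains_Inf by blast
  define T where "T = Inf B"
  have "T \<ge> 0" "x T \<notin> U"
    using \<open>Inf B \<in> B\<close> by (auto simp: T_def B_def)
  then have "T > 0"
    using \<open>x 0 \<in> U\<close> by (cases "T = 0") auto
  have before: "\<forall>t\<in>{0..<T}. x t \<in> U"
    using cInf_lower[OF _ \<open>bdd_below B\<close>] by (force simp: T_def B_def)
  obtain K where "closed K" "K \<subseteq> U" "x ` {0..<T} \<subseteq> K"
    using trap[OF \<open>T > 0\<close> before] by auto
  moreover have "continuous_on (closure {0..<T}) x"
    using \<open>T > 0\<close> by (auto intro: continuous_on_subset[OF cont])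
  ultimately have "x ` closure {0..<T} \<subseteq> K"
    by (intro image_closure_subset)
  moreover have "T \<in> closure {0..<T}"
    using \<open>T > 0\<close> by simp
  ultimately show False
    using \<open>K \<subseteq> U\<close> \<open>x T \<notin> U\<close> by blast
qed

lemma uniformly_continuous_on_compose_compact:
  fixes x :: "'a::metric_space \<Rightarrow> 'b::metric_space" and \<phi> :: "'b \<Rightarrow> 'c::metric_space"
  assumes "uniformly_continuous_on A x" "x ` A \<subseteq> K" "compact K" "continuous_on K \<phi>"
  shows "uniformly_continuous_on A (\<lambda>t. \<phi> (x t))"
proof (rule uniformly_continuous_on_compose[OF assms(1)])
  show "uniformly_continuous_on (x ` A) \<phi>"
    using compact_uniformly_continuous[OF assms(4,3)] assms(2)
    unfolding uniformly_continuous_on_def by (meson subsetD)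
qed

lemma has_vector_derivative_fst:
  "(x has_vector_derivative v) F \<Longrightarrow> ((\<lambda>t. fst (x t)) has_vector_derivative fst v) F"
  unfolding has_vector_derivative_def by (drule has_derivative_fst) simp

lemma has_vector_derivative_snd:
  "(x has_vector_derivative v) F \<Longrightarrow> ((\<lambda>t. snd (x t)) has_vector_derivative snd v) F"
  unfolding has_vector_derivative_def by (drule has_derivative_snd) simp

section \<open>Lyapunov's direct method\<close>

lemma globally_asymptotically_stable_inI_lyapunov:
  fixes f :: "'a::real_normed_vector \<Rightarrow> 'a" and L :: "'a \<Rightarrow> real"
  assumes "continuous (at xe) L" "L xe = 0"
    and small: "\<And>\<epsilon>. \<epsilon> > 0 \<Longrightarrow> \<exists>\<eta>>0. \<forall>y\<in>P. L y < \<eta> \<longrightarrow> dist y xe < \<epsilon>"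
    and invariant: "\<And>x t. is_forward_solution f x \<Longrightarrow> x 0 \<in> D \<Longrightarrow> t \<ge> 0 \<Longrightarrow>
                      x t \<in> P \<and> L (x t) \<le> L (x 0)"
    and attractive: "\<And>x. is_forward_solution f x \<Longrightarrow> x 0 \<in> D \<Longrightarrow> (x \<longlongrightarrow> xe) at_top"
  shows "globally_asymptotically_stable_in f D xe"
  unfolding globally_asymptotically_stable_in_def
proof (intro conjI allI impI)
  fix \<epsilon> :: real assume "\<epsilon> > 0"
  then obtain \<eta> where "\<eta> > 0" and \<eta>: "\<forall>y\<in>P. L y < \<eta> \<longrightarrow> dist y xe < \<epsilon>"
    using small by blast
  then obtain \<delta> where "\<delta> > 0" and \<delta>: "\<And>y. dist y xe < \<delta> \<Longrightarrow> dist (L y) (L xe) < \<eta>"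
    using assms(1) unfolding continuous_at_eps_delta by blast
  show "\<exists>\<delta>>0. \<forall>x. is_forward_solution f x \<and> x 0 \<in> D \<and> dist (x 0) xe < \<delta> \<longrightarrow>
          (\<forall>t\<ge>0. dist (x t) xe < \<epsilon>)"
  proof (intro exI[of _ \<delta>] conjI allI impI)
    fix x and t :: real
    assume x: "is_forward_solution f x \<and> x 0 \<in> D \<and> dist (x 0) xe < \<delta>" and "t \<ge> 0"
    then have "L (x t) < \<eta>"
      using invariant[of x t] \<delta>[of "x 0"] \<open>L xe = 0\<close> by (auto simp: dist_real_def)
    then show "dist (x t) xe < \<epsilon>"
      using \<eta> invariant[of x t] x \<open>t \<ge> 0\<close> by blast
  qed (fact \<open>\<delta> > 0\<close>)
qed (use attractive in blast)

lemma globally_asymptotically_stable_in_subset: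
  "globally_asymptotically_stable_in f D xe \<Longrightarrow> D' \<subseteq> D \<Longrightarrow> globally_asymptotically_stable_in f D' xe"
  unfolding globally_asymptotically_stable_in_def by blast

section \<open>A general SEIR system\<close>

definition open_orthant :: "(real \<times> real \<times> real) set" where
  "open_orthant = {0<..} \<times> {0<..} \<times> {0<..}"

lemma open_open_orthant: "open open_orthant"
  unfolding open_orthant_def by (intro open_Times open_greaterThan)

lemma mem_open_orthant [simp]: "(s, e, i) \<in> open_orthant \<longleftrightarrow> s > 0 \<and> e > 0 \<and> i > 0"
  by (simp add: open_orthant_def)

lemma mem_open_orthant_iff:
  "y \<in> open_orthant \<longleftrightarrow> fst y > 0 \<and> fst (snd y) > 0 \<and> snd (snd y) > 0"
  by (cases y) auto

lemma dist_triple_le: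
  fixes s e i s' e' i' :: real
  shows "dist (s, e, i) (s', e', i') \<le> \<bar>s - s'\<bar> + \<bar>e - e'\<bar> + \<bar>i - i'\<bar>"
proof -
  have "norm (s - s', e - e', i - i') \<le> norm (s - s') + norm (e - e', i - i')"
    by (rule norm_Pair_le)
  also have "norm (e - e', i - i') \<le> norm (e - e') + norm (i - i')"
    by (rule norm_Pair_le)
  finally show ?thesis
    by (simp add: dist_norm)
qed

definition seir_rhs ::
  "real \<Rightarrow> real \<Rightarrow> real \<Rightarrow> real \<Rightarrow> real \<Rightarrow> real \<Rightarrow> real \<times> real \<times> real \<Rightarrow> real \<times> real \<times> real" where
  "seir_rhs \<Lambda> b m a1 a2 \<sigma> =
     (\<lambda>(s, e, i). (\<Lambda> - b * s * i - m * s, b * s * i - a1 * e, \<sigma> * e - a2 * i))"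

lemma continuous_on_seir_rhs: "continuous_on A (seir_rhs \<Lambda> b m a1 a2 \<sigma>)"
  unfolding seir_rhs_def split_beta' by (intro continuous_intros)

locale seir_equilibrium =
  fixes \<Lambda> b m a1 a2 \<sigma> Se Ee Ie :: real
  assumes params_pos: "b > 0" "m > 0" "a1 > 0" "a2 > 0" "\<sigma> > 0"
    and equilibrium_pos: "Se > 0" "Ee > 0" "Ie > 0"
    and equilibrium: "seir_rhs \<Lambda> b m a1 a2 \<sigma> (Se, Ee, Ie) = 0"
begin

lemma equilibrium_eqs:
  "\<Lambda> = b * Se * Ie + m * Se" "b * Se * Ie = a1 * Ee" "\<sigma> * Ee = a2 * Ie"
  using equilibrium by (auto simp: seir_rhs_def zero_prod_def)

lemma equilibrium_in_open_orthant: "(Se, Ee, Ie) \<in> open_orthant"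
  using equilibrium_pos by simp

text \<open>The weight \<open>a1 / \<sigma>\<close> makes the terms linear in \<open>e\<close> cancel in the orbital derivative.\<close>
definition lyap :: "real \<times> real \<times> real \<Rightarrow> real" where
  "lyap = (\<lambda>(s, e, i). volterra Se s + volterra Ee e + a1 / \<sigma> * volterra Ie i)"

definition dissipation :: "real \<times> real \<times> real \<Rightarrow> real" where
  "dissipation = (\<lambda>(s, e, i). m * (s - Se)\<^sup>2 / s
     + b * Se * Ie * (Se / s + s * i * Ee / (Se * Ie * e) + e * Ie / (Ee * i) - 3))"

lemma lyap_orbital_derivative:
  assumes "s > 0" "e > 0" "i > 0"
  shows "(1 - Se / s) * (\<Lambda> - b * s * i - m * s) + (1 - Ee / e) * (b * s * i - a1 * e)
           + a1 / \<sigma> * ((1 - Ie / i) * (\<sigma> * e - a2 * i)) = - dissipation (s, e, i)"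
proof -
  have a1: "a1 = b * Se * Ie / Ee" and a2: "a2 = \<sigma> * Ee / Ie"
    using equilibrium_eqs equilibrium_pos params_pos by (simp_all add: field_simps)
  show ?thesis
    unfolding dissipation_def equilibrium_eqs(1) a1 a2 using assms equilibrium_pos params_pos
    by (simp add: field_simps) (simp add: algebra_simps power2_eq_square)
qed

lemma dissipation_ge:
  assumes "s > 0" "e > 0" "i > 0"
  shows "m * (s - Se)\<^sup>2 / s \<le> dissipation (s, e, i)"
proof -
  have "3 \<le> Se / s + s * i * Ee / (Se * Ie * e) + e * Ie / (Ee * i)"
    using assms equilibrium_pos by (intro three_le_sum_if_prod_eq_one) (auto simp: field_simps)
  then show ?thesis
    using params_pos equilibrium_pos by (simp add: dissipation_def)
qed

lemma dissipation_nonneg: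
  assumes "y \<in> open_orthant"
  shows "0 \<le> dissipation y"
proof -
  obtain s e i where y: "y = (s, e, i)" "s > 0" "e > 0" "i > 0"
    using assms by (cases y) auto
  have "0 \<le> m * (s - Se)\<^sup>2 / s"
    using y params_pos by simp
  then show ?thesis
    using dissipation_ge[OF y(2-4)] unfolding y(1) by linarith
qed

lemma volterra_le_lyap:
  assumes "(s, e, i) \<in> open_orthant"
  shows "volterra Se s \<le> lyap (s, e, i)" "volterra Ee e \<le> lyap (s, e, i)"
    "volterra Ie i \<le> \<sigma> / a1 * lyap (s, e, i)"
proof -
  have "0 \<le> volterra Se s" "0 \<le> volterra Ee e" "0 \<le> volterra Ie i"
    using assms equilibrium_pos by (auto intro!: volterra_nonneg)
  then show "volterra Se s \<le> lyap (s, e, i)" "volterra Ee e \<le> lyap (s, e, i)"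
    "volterra Ie i \<le> \<sigma> / a1 * lyap (s, e, i)"
    using params_pos by (auto simp: lyap_def field_simps)
qed

lemma lyap_nonneg:
  assumes "y \<in> open_orthant"
  shows "0 \<le> lyap y"
proof -
  obtain s e i where y: "y = (s, e, i)" "(s, e, i) \<in> open_orthant"
    using assms by (cases y) auto
  have "0 \<le> volterra Se s"
    using y equilibrium_pos by (simp add: volterra_nonneg)
  then show ?thesis
    using volterra_le_lyap(1)[OF y(2)] unfolding y(1) by linarith
qed

lemma lyap_equilibrium [simp]: "lyap (Se, Ee, Ie) = 0"
  using equilibrium_pos by (simp add: lyap_def volterra_def)

lemma continuous_on_lyap: "continuous_on open_orthant lyap"
  unfolding lyap_def volterra_def split_beta' using equilibrium_pos
  by (intro continuous_intros) (auto simp: open_orthant_def)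

lemma continuous_on_dissipation: "continuous_on open_orthant dissipation"
  unfolding dissipation_def split_beta' using equilibrium_pos
  by (intro continuous_intros) (auto simp: open_orthant_def)

lemma lyap_sublevel_compact:
  "\<exists>K. compact K \<and> K \<subseteq> open_orthant \<and> {y \<in> open_orthant. lyap y \<le> C} \<subseteq> K"
proof -
  define box where "box a c = {a * exp (- (c + a) / a) .. (sqrt a + sqrt c)\<^sup>2}" for a c
  have box_pos: "box a c \<subseteq> {0<..}" if "a > 0" for a c
    using that by (auto simp: box_def intro: less_le_trans[rotated])
  have in_box: "u \<in> box a c" if "a > 0" "u > 0" "volterra a u \<le> c" for a u c
    using volterra_sublevel_subset[OF that(1), of c] that unfolding box_def by blast
  define K where "K = box Se C \<times> box Ee C \<times> box Ie (\<sigma> / a1 * C)"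
  have "{y \<in> open_orthant. lyap y \<le> C} \<subseteq> K"
  proof clarify
    fix s e i assume y: "(s, e, i) \<in> open_orthant" "lyap (s, e, i) \<le> C"
    have "volterra Ie i \<le> \<sigma> / a1 * C"
      using volterra_le_lyap(3)[OF y(1)] y(2) params_pos
      by (meson order_trans divide_nonneg_pos less_imp_le mult_left_mono)
    moreover have "volterra Se s \<le> C" "volterra Ee e \<le> C"
      using volterra_le_lyap(1,2)[OF y(1)] y(2) by linarith+
    ultimately show "(s, e, i) \<in> K"
      using y(1) equilibrium_pos unfolding K_def by (auto intro: in_box)
  qed
  moreover have "compact K"
    unfolding K_def box_def by (intro compact_Times compact_Icc)
  moreover have "K \<subseteq> open_orthant"
    unfolding K_def open_orthant_def using box_pos equilibrium_pos by (intro Sigma_mono) auto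
  ultimately show ?thesis
    by blast
qed

lemma lyap_small_imp_near_equilibrium:
  assumes "\<epsilon> > 0"
  shows "\<exists>\<eta>>0. \<forall>y\<in>open_orthant. lyap y < \<eta> \<longrightarrow> dist y (Se, Ee, Ie) < \<epsilon>"
proof -
  define r where "r a \<eta> = sqrt \<eta> * (2 * sqrt a + sqrt \<eta>)" for a \<eta> :: real
  have "((\<lambda>\<eta>. r Se \<eta> + r Ee \<eta> + r Ie (\<sigma> / a1 * \<eta>)) \<longlongrightarrow> 0) (at_right 0)"
    unfolding r_def by (rule tendsto_eq_intros refl | simp)+
  then have "\<forall>\<^sub>F \<eta> in at_right 0. r Se \<eta> + r Ee \<eta> + r Ie (\<sigma> / a1 * \<eta>) < \<epsilon>"
    using assms by (auto dest: order_tendstoD(2))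
  then obtain c where "c > 0" and c: "\<And>\<eta>. 0 < \<eta> \<Longrightarrow> \<eta> < c \<Longrightarrow>
      r Se \<eta> + r Ee \<eta> + r Ie (\<sigma> / a1 * \<eta>) < \<epsilon>"
    by (auto simp: eventually_at_right_field)
  define \<eta> where "\<eta> = c / 2"
  have "\<eta> > 0" and \<eta>: "r Se \<eta> + r Ee \<eta> + r Ie (\<sigma> / a1 * \<eta>) < \<epsilon>"
    using \<open>c > 0\<close> c[of \<eta>] by (auto simp: \<eta>_def)
  have "dist (s, e, i) (Se, Ee, Ie) < \<epsilon>" if y: "(s, e, i) \<in> open_orthant" "lyap (s, e, i) < \<eta>"
    for s e i
  proof -
    have "\<sigma> / a1 * lyap (s, e, i) \<le> \<sigma> / a1 * \<eta>"
      using y(2) params_pos by (intro mult_left_mono) auto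
    then have "volterra Ie i \<le> \<sigma> / a1 * \<eta>"
      using volterra_le_lyap(3)[OF y(1)] by linarith
    then have "\<bar>i - Ie\<bar> \<le> r Ie (\<sigma> / a1 * \<eta>)"
      unfolding r_def using y equilibrium_pos by (intro dist_le_of_volterra_le) auto
    moreover have "\<bar>s - Se\<bar> \<le> r Se \<eta>" "\<bar>e - Ee\<bar> \<le> r Ee \<eta>"
      unfolding r_def using y volterra_le_lyap(1,2)[OF y(1)] equilibrium_pos
      by (auto intro!: dist_le_of_volterra_le)
    ultimately show ?thesis
      using dist_triple_le[of s e i Se Ee Ie] \<eta> by linarith
  qed
  then show ?thesis
    using \<open>\<eta> > 0\<close> by (intro exI[of _ \<eta>]) auto
qed

end

locale seir_solution = seir_equilibrium +
  fixes x :: "real \<Rightarrow> real \<times> real \<times> real"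
  assumes solution: "is_forward_solution (seir_rhs \<Lambda> b m a1 a2 \<sigma>) x"
    and initial: "x 0 \<in> open_orthant"
begin

abbreviation S :: "real \<Rightarrow> real" where "S t \<equiv> fst (x t)"
abbreviation E :: "real \<Rightarrow> real" where "E t \<equiv> fst (snd (x t))"
abbreviation I :: "real \<Rightarrow> real" where "I t \<equiv> snd (snd (x t))"

lemma has_vector_derivative_trajectory:
  "t \<ge> 0 \<Longrightarrow> (x has_vector_derivative seir_rhs \<Lambda> b m a1 a2 \<sigma> (x t)) (at t within {0..})"
  using solution by (simp add: is_forward_solution_def)

lemma has_real_derivative_components:
  assumes "t \<ge> 0"
  shows "(S has_real_derivative \<Lambda> - b * S t * I t - m * S t) (at t within {0..})"
    and "(E has_real_derivative b * S t * I t - a1 * E t) (at t within {0..})"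
    and "(I has_real_derivative \<sigma> * E t - a2 * I t) (at t within {0..})"
proof -
  note x' = has_vector_derivative_trajectory[OF assms]
  note rhs = seir_rhs_def split_beta
  show "(S has_real_derivative \<Lambda> - b * S t * I t - m * S t) (at t within {0..})"
    using has_vector_derivative_fst[OF x'] by (simp add: has_real_derivative_iff_has_vector_derivative rhs)
  show "(E has_real_derivative b * S t * I t - a1 * E t) (at t within {0..})"
    using has_vector_derivative_fst[OF has_vector_derivative_snd[OF x']]
    by (simp add: has_real_derivative_iff_has_vector_derivative rhs)
  show "(I has_real_derivative \<sigma> * E t - a2 * I t) (at t within {0..})"
    using has_vector_derivative_snd[OF has_vector_derivative_snd[OF x']]
    by (simp add: has_real_derivative_iff_has_vector_derivative rhs)
qed

lemma continuous_on_trajectory: "continuous_on {0..} x"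
  unfolding continuous_on_eq_continuous_within
  by (auto intro: has_vector_derivative_continuous[OF has_vector_derivative_trajectory])

lemma lyap_has_real_derivative:
  assumes "t \<ge> 0" "x t \<in> open_orthant"
  shows "((\<lambda>t. lyap (x t)) has_real_derivative - dissipation (x t)) (at t within {0..})"
proof -
  have pos: "S t > 0" "E t > 0" "I t > 0"
    using assms(2) by (simp_all add: mem_open_orthant_iff)
  have "((\<lambda>t. volterra Se (S t) + volterra Ee (E t) + a1 / \<sigma> * volterra Ie (I t)) has_real_derivative
      (1 - Se / S t) * (\<Lambda> - b * S t * I t - m * S t) + (1 - Ee / E t) * (b * S t * I t - a1 * E t)
      + a1 / \<sigma> * ((1 - Ie / I t) * (\<sigma> * E t - a2 * I t))) (at t within {0..})"
    using pos equilibrium_pos has_real_derivative_components[OF assms(1)]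
    by (intro DERIV_add DERIV_cmult DERIV_chain2[OF volterra_has_real_derivative]) auto
  then show ?thesis
    using lyap_orbital_derivative[OF pos] by (simp add: lyap_def split_beta)
qed

lemma lyap_nonincreasing_while_positive:
  assumes "0 \<le> s" "s \<le> t" "\<And>r. s \<le> r \<Longrightarrow> r \<le> t \<Longrightarrow> x r \<in> open_orthant"
  shows "lyap (x t) \<le> lyap (x s)"
  using assms
  by (intro has_real_derivative_nonpos_imp_nonincreasing[OF _ _ lyap_has_real_derivative])
    (auto intro: dissipation_nonneg)

text \<open>Positivity is proved with the Lyapunov function itself: as long as the solution is positive,
  it stays in a compact sublevel set of \<open>lyap\<close>, which is bounded away from the boundary.\<close>
lemma trajectory_in_open_orthant:
  assumes "t \<ge> 0"
  shows "x t \<in> open_orthant"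
proof (rule stays_in_open_if_trapped[OF continuous_on_trajectory open_open_orthant initial _ assms])
  fix T :: real assume "\<forall>t\<in>{0..<T}. x t \<in> open_orthant"
  then have "lyap (x t) \<le> lyap (x 0)" if "t \<in> {0..<T}" for t
    using that by (intro lyap_nonincreasing_while_positive) auto
  moreover obtain K where "compact K" "K \<subseteq> open_orthant"
    "{y \<in> open_orthant. lyap y \<le> lyap (x 0)} \<subseteq> K"
    using lyap_sublevel_compact by blast
  ultimately show "\<exists>K. closed K \<and> K \<subseteq> open_orthant \<and> (\<forall>t\<in>{0..<T}. x t \<in> K)"
    using \<open>\<forall>t\<in>{0..<T}. x t \<in> open_orthant\<close> by (intro exI[of _ K]) (auto intro: compact_imp_closed)
qed

lemma lyap_antimono: "0 \<le> s \<Longrightarrow> s \<le> t \<Longrightarrow> lyap (x t) \<le> lyap (x s)"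
  by (intro lyap_nonincreasing_while_positive trajectory_in_open_orthant) auto

lemma trajectory_in_compact: "\<exists>K. compact K \<and> K \<subseteq> open_orthant \<and> x ` {0..} \<subseteq> K"
proof -
  obtain K where "compact K" "K \<subseteq> open_orthant" "{y \<in> open_orthant. lyap y \<le> lyap (x 0)} \<subseteq> K"
    using lyap_sublevel_compact by blast
  then show ?thesis
    using lyap_antimono[of 0] trajectory_in_open_orthant by (intro exI[of _ K]) auto
qed

lemma uniformly_continuous_trajectory: "uniformly_continuous_on {0..} x"
proof -
  obtain K where K: "compact K" "K \<subseteq> open_orthant" "x ` {0..} \<subseteq> K"
    using trajectory_in_compact by blast
  have "bounded (seir_rhs \<Lambda> b m a1 a2 \<sigma> ` K)"
    using K(1) by (intro compact_imp_bounded compact_continuous_image continuous_on_seir_rhs)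
  then obtain B where "B > 0" and B: "\<And>y. y \<in> K \<Longrightarrow> norm (seir_rhs \<Lambda> b m a1 a2 \<sigma> y) \<le> B"
    unfolding bounded_pos by blast
  have "B-lipschitz_on {0..} x"
  proof (rule bounded_derivative_imp_lipschitz)
    show "(x has_derivative (\<lambda>h. h *\<^sub>R seir_rhs \<Lambda> b m a1 a2 \<sigma> (x t))) (at t within {0..})"
      if "t \<in> {0..}" for t
      using has_vector_derivative_trajectory[of t] that by (simp add: has_vector_derivative_def)
    show "onorm (\<lambda>h. h *\<^sub>R seir_rhs \<Lambda> b m a1 a2 \<sigma> (x t)) \<le> B" if "t \<in> {0..}" for t
      using B[of "x t"] K(3) that by (simp add: onorm_scaleR_left[OF bounded_linear_ident] onorm_id) blast
  qed (use \<open>B > 0\<close> in auto)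
  then show ?thesis
    by (rule lipschitz_on_uniformly_continuous)
qed

lemma uniformly_continuous_along_trajectory:
  fixes \<phi> :: "real \<times> real \<times> real \<Rightarrow> real"
  assumes "continuous_on open_orthant \<phi>"
  shows "uniformly_continuous_on {0..} (\<lambda>t. \<phi> (x t))"
proof -
  obtain K where K: "compact K" "K \<subseteq> open_orthant" "x ` {0..} \<subseteq> K"
    using trajectory_in_compact by blast
  show ?thesis
    by (rule uniformly_continuous_on_compose_compact[OF uniformly_continuous_trajectory K(3,1)
          continuous_on_subset[OF assms K(2)]])
qed

lemma dissipation_tendsto_0: "((\<lambda>t. dissipation (x t)) \<longlongrightarrow> 0) at_top"
proof -
  have "0 \<le> lyap (x t)" if "t \<ge> 0" for t
    using lyap_nonneg trajectory_in_open_orthant[OF that] by simp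
  then have "bdd_below ((\<lambda>t. lyap (x t)) ` {0..})"
    by (intro bdd_belowI[of _ 0]) auto
  then have "((\<lambda>t. lyap (x t)) \<longlongrightarrow> Inf ((\<lambda>t. lyap (x t)) ` {0..})) at_top"
    using lyap_antimono by (intro antimono_tendsto_Inf)
  then have "((\<lambda>t. - dissipation (x t)) \<longlongrightarrow> 0) at_top"
    using lyap_has_real_derivative trajectory_in_open_orthant
      uniformly_continuous_along_trajectory[OF continuous_on_minus[OF continuous_on_dissipation]]
    by (intro barbalat) auto
  from tendsto_minus[OF this] show ?thesis
    by simp
qed

lemma S_tendsto: "(S \<longlongrightarrow> Se) at_top"
proof -
  obtain K where K: "compact K" "x ` {0..} \<subseteq> K"
    using trajectory_in_compact by blast
  then obtain R where R: "\<And>t. t \<ge> 0 \<Longrightarrow> norm (x t) \<le> R"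
    using compact_imp_bounded[OF K(1)] unfolding bounded_iff by auto
  have "(S t - Se)\<^sup>2 \<le> R / m * dissipation (x t)" if "t \<ge> 0" for t
  proof -
    have pos: "S t > 0" "E t > 0" "I t > 0"
      using trajectory_in_open_orthant[OF that] by (simp_all add: mem_open_orthant_iff)
    have "m * (S t - Se)\<^sup>2 \<le> S t * dissipation (x t)"
      using dissipation_ge[OF pos] pos params_pos by (simp add: field_simps)
    also have "\<dots> \<le> R * dissipation (x t)"
      using R[OF that] norm_fst_le[of "S t" "snd (x t)"] pos
        dissipation_nonneg[OF trajectory_in_open_orthant[OF that]]
      by (intro mult_right_mono) auto
    finally show ?thesis
      using params_pos by (simp add: field_simps)
  qed
  then have upper: "\<forall>\<^sub>F t in at_top. (S t - Se)\<^sup>2 \<le> R / m * dissipation (x t)"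
    by (intro eventually_at_top_linorderI[of 0])
  have lower: "\<forall>\<^sub>F t in at_top. 0 \<le> (S t - Se)\<^sup>2"
    by simp
  have "((\<lambda>t. (S t - Se)\<^sup>2) \<longlongrightarrow> 0) at_top"
    by (rule tendsto_sandwich[OF lower upper tendsto_const
          tendsto_mult_right_zero[OF dissipation_tendsto_0]])
  then have "((\<lambda>t. sqrt ((S t - Se)\<^sup>2)) \<longlongrightarrow> sqrt 0) at_top"
    by (rule tendsto_real_sqrt)
  then have "((\<lambda>t. S t - Se) \<longlongrightarrow> 0) at_top"
    by (simp add: tendsto_rabs_zero_iff)
  then show ?thesis
    by (rule LIM_zero_cancel)
qed

text \<open>Once \<open>S\<close> converges, Barbalat's lemma forces \<open>S'\<close> to vanish, which pins down the limit of \<open>I\<close>;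
  in the same way \<open>I'\<close> vanishes and pins down the limit of \<open>E\<close>.\<close>
lemma I_tendsto: "(I \<longlongrightarrow> Ie) at_top"
proof -
  define S' where "S' t = \<Lambda> - b * S t * I t - m * S t" for t
  have "uniformly_continuous_on {0..} (\<lambda>t. (\<lambda>y. \<Lambda> - b * fst y * snd (snd y) - m * fst y) (x t))"
    by (intro uniformly_continuous_along_trajectory continuous_intros)
  then have "(S' \<longlongrightarrow> 0) at_top"
    using has_real_derivative_components(1) unfolding S'_def
    by (intro barbalat[OF _ S_tendsto]) auto
  then have "((\<lambda>t. (\<Lambda> - m * S t - S' t) / (b * S t)) \<longlongrightarrow> (\<Lambda> - m * Se - 0) / (b * Se)) at_top"
    using S_tendsto params_pos equilibrium_pos by (intro tendsto_intros) auto
  moreover have "(\<Lambda> - m * Se - 0) / (b * Se) = Ie"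
    using equilibrium_eqs(1) params_pos equilibrium_pos by (simp add: field_simps)
  moreover have "\<forall>\<^sub>F t in at_top. (\<Lambda> - m * S t - S' t) / (b * S t) = I t"
  proof (rule eventually_at_top_linorderI[of 0])
    fix t :: real assume "t \<ge> 0"
    then have "S t > 0"
      using trajectory_in_open_orthant[of t] by (simp add: mem_open_orthant_iff)
    then show "(\<Lambda> - m * S t - S' t) / (b * S t) = I t"
      using params_pos by (simp add: S'_def field_simps)
  qed
  ultimately show ?thesis
    using tendsto_cong by fastforce
qed

lemma E_tendsto: "(E \<longlongrightarrow> Ee) at_top"
proof -
  define I' where "I' t = \<sigma> * E t - a2 * I t" for t
  have "uniformly_continuous_on {0..} (\<lambda>t. (\<lambda>y. \<sigma> * fst (snd y) - a2 * snd (snd y)) (x t))"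
    by (intro uniformly_continuous_along_trajectory continuous_intros)
  then have "(I' \<longlongrightarrow> 0) at_top"
    using has_real_derivative_components(3) unfolding I'_def
    by (intro barbalat[OF _ I_tendsto]) auto
  then have "((\<lambda>t. (I' t + a2 * I t) / \<sigma>) \<longlongrightarrow> (0 + a2 * Ie) / \<sigma>) at_top"
    using I_tendsto params_pos by (intro tendsto_intros) auto
  moreover have "(0 + a2 * Ie) / \<sigma> = Ee"
    using equilibrium_eqs(3) params_pos by (simp add: field_simps)
  moreover have "(I' t + a2 * I t) / \<sigma> = E t" for t
    using params_pos by (simp add: I'_def)
  ultimately show ?thesis
    by simp
qed

lemma trajectory_tendsto: "(x \<longlongrightarrow> (Se, Ee, Ie)) at_top"
  using tendsto_Pair[OF S_tendsto tendsto_Pair[OF E_tendsto I_tendsto]] by simp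

end

theorem (in seir_equilibrium) globally_asymptotically_stable_in_open_orthant:
  "globally_asymptotically_stable_in (seir_rhs \<Lambda> b m a1 a2 \<sigma>) open_orthant (Se, Ee, Ie)"
proof (rule globally_asymptotically_stable_inI_lyapunov[where L = lyap and P = open_orthant])
  show "continuous (at (Se, Ee, Ie)) lyap"
    using continuous_on_lyap equilibrium_in_open_orthant open_open_orthant
    by (simp add: continuous_on_eq_continuous_at)
  fix x assume "is_forward_solution (seir_rhs \<Lambda> b m a1 a2 \<sigma>) x" "x 0 \<in> open_orthant"
  then interpret seir_solution \<Lambda> b m a1 a2 \<sigma> Se Ee Ie x
    by unfold_locales
  show "(x \<longlongrightarrow> (Se, Ee, Ie)) at_top"
    by (rule trajectory_tendsto)
  show "x t \<in> open_orthant \<and> lyap (x t) \<le> lyap (x 0)" if "t \<ge> 0" for t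
    using that by (simp add: trajectory_in_open_orthant lyap_antimono)
qed (simp_all add: lyap_small_imp_near_equilibrium)

section \<open>The vaccination model\<close>

lemma interior_Omega_subset_open_orthant: "interior (Omega N) \<subseteq> open_orthant"
proof -
  have "Omega N \<subseteq> {0..} \<times> {0..} \<times> {0..}"
    by (auto simp: Omega_def)
  then have "interior (Omega N) \<subseteq> interior ({0..} \<times> {0..} \<times> {0..})"
    by (rule interior_mono)
  then show ?thesis
    by (simp add: interior_Times open_orthant_def)
qed

lemma seir_field_eq_seir_rhs:
  "seir_field N \<mu> \<beta> \<sigma> \<gamma> p \<rho> = seir_rhs (\<mu> * N) (\<beta> * (1 - \<rho>) / N) (p / N + \<mu>) (\<sigma> + \<mu>) (\<gamma> + \<mu>) \<sigma>"
  by (auto simp: seir_field_def seir_rhs_def algebra_simps)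

lemma seir_rhs_endemic_equilibrium:
  fixes N \<mu> \<beta> \<sigma> \<gamma> p \<rho> :: real
  defines "Se \<equiv> (\<sigma> + \<mu>) * (\<gamma> + \<mu>) * N / (\<sigma> * \<beta> * (1 - \<rho>))"
    and "Ie \<equiv> (\<mu> * N * \<sigma> * \<beta> * (1 - \<rho>) - (\<sigma> + \<mu>) * (\<gamma> + \<mu>) * (p + \<mu> * N))
              / ((\<sigma> + \<mu>) * (\<gamma> + \<mu>) * \<beta> * (1 - \<rho>))"
  assumes "N > 0" "\<mu> > 0" "\<beta> > 0" "\<sigma> > 0" "\<gamma> > 0" "\<rho> < 1"
  shows "seir_rhs (\<mu> * N) (\<beta> * (1 - \<rho>) / N) (p / N + \<mu>) (\<sigma> + \<mu>) (\<gamma> + \<mu>) \<sigma>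
           (Se, (\<gamma> + \<mu>) / \<sigma> * Ie, Ie) = 0"
proof -
  define k A B where "k = \<beta> * (1 - \<rho>)" and "A = \<sigma> + \<mu>" and "B = \<gamma> + \<mu>"
  have pos: "k > 0" "A > 0" "B > 0" "N > 0" "\<sigma> > 0"
    using assms(3-8) by (simp_all add: k_def A_def B_def)
  have Se_eq: "Se = A * B * N / (\<sigma> * k)"
    and Ie_eq: "Ie = (\<mu> * N * \<sigma> * k - A * B * (p + \<mu> * N)) / (A * B * k)"
    by (simp_all add: Se_def Ie_def k_def A_def B_def mult.assoc)
  have infection: "k / N * Se = A * B / \<sigma>"
    and removal: "(p / N + \<mu>) * Se = A * B * (p + \<mu> * N) / (\<sigma> * k)"
    and incidence: "A * B / \<sigma> * Ie = \<mu> * N - A * B * (p + \<mu> * N) / (\<sigma> * k)"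
    unfolding Se_eq Ie_eq using pos by (simp_all add: field_simps)
  have "\<mu> * N - k / N * Se * Ie - (p / N + \<mu>) * Se = 0"
    by (simp only: infection removal incidence)
  moreover have "k / N * Se * Ie - A * (B / \<sigma> * Ie) = 0"
    by (simp only: infection) simp
  moreover have "\<sigma> * (B / \<sigma> * Ie) - B * Ie = 0"
    using pos by simp
  ultimately show ?thesis
    unfolding seir_rhs_def k_def[symmetric] A_def[symmetric] B_def[symmetric]
    by (simp add: zero_prod_def)
qed

lemma seir_endemic_equilibrium:
  fixes N \<mu> \<beta> \<sigma> \<gamma> p \<rho> :: real
  defines "Se \<equiv> (\<sigma> + \<mu>) * (\<gamma> + \<mu>) * N / (\<sigma> * \<beta> * (1 - \<rho>))"
    and "Ie \<equiv> (\<mu> * N * \<sigma> * \<beta> * (1 - \<rho>) - (\<sigma> + \<mu>) * (\<gamma> + \<mu>) * (p + \<mu> * N))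
              / ((\<sigma> + \<mu>) * (\<gamma> + \<mu>) * \<beta> * (1 - \<rho>))"
  assumes "N > 0" "\<mu> > 0" "\<beta> > 0" "\<sigma> > 0" "\<gamma> > 0" "p > 0" "\<rho> < 1"
    and R0: "\<mu> * N * \<sigma> * \<beta> * (1 - \<rho>) / ((\<sigma> + \<mu>) * (\<gamma> + \<mu>) * (p + \<mu> * N)) > 1"
  shows "seir_equilibrium (\<mu> * N) (\<beta> * (1 - \<rho>) / N) (p / N + \<mu>) (\<sigma> + \<mu>) (\<gamma> + \<mu>) \<sigma>
           Se ((\<gamma> + \<mu>) / \<sigma> * Ie) Ie"
proof
  have "(\<sigma> + \<mu>) * (\<gamma> + \<mu>) * (p + \<mu> * N) > 0"
    using assms(3-9) by (intro mult_pos_pos add_pos_pos) auto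
  then have "(\<sigma> + \<mu>) * (\<gamma> + \<mu>) * (p + \<mu> * N) < \<mu> * N * \<sigma> * \<beta> * (1 - \<rho>)"
    using R0 by (simp add: less_divide_eq)
  then show "Ie > 0"
    unfolding Ie_def using assms(3-9) by (intro divide_pos_pos) auto
  then show "(\<gamma> + \<mu>) / \<sigma> * Ie > 0"
    using assms(3-9) by simp
  show "Se > 0"
    unfolding Se_def using assms(3-9) by simp
  show "seir_rhs (\<mu> * N) (\<beta> * (1 - \<rho>) / N) (p / N + \<mu>) (\<sigma> + \<mu>) (\<gamma> + \<mu>) \<sigma>
          (Se, (\<gamma> + \<mu>) / \<sigma> * Ie, Ie) = 0"
    unfolding Se_def Ie_def using assms(3-7,9) by (rule seir_rhs_endemic_equilibrium)
qed (use assms(3-9) in \<open>auto intro: add_pos_pos\<close>)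

theorem mainTheorem12:
  fixes N \<mu> \<beta> \<sigma> \<gamma> p \<rho> :: real
  assumes "N > 0" "\<mu> > 0" "\<beta> > 0" "\<sigma> > 0" "\<gamma> > 0" "p > 0"
    and "0 < \<rho>" "\<rho> < 1"
    and "\<mu> * N * \<sigma> * \<beta> * (1 - \<rho>) / ((\<sigma> + \<mu>) * (\<gamma> + \<mu>) * (p + \<mu> * N)) > 1"
  shows "let Se = (\<sigma> + \<mu>) * (\<gamma> + \<mu>) * N / (\<sigma> * \<beta> * (1 - \<rho>));
             Ie = (\<mu> * N * \<sigma> * \<beta> * (1 - \<rho>) - (\<sigma> + \<mu>) * (\<gamma> + \<mu>) * (p + \<mu> * N))
                  / ((\<sigma> + \<mu>) * (\<gamma> + \<mu>) * \<beta> * (1 - \<rho>));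
             Ee = (\<gamma> + \<mu>) / \<sigma> * Ie
         in globally_asymptotically_stable_in (seir_field N \<mu> \<beta> \<sigma> \<gamma> p \<rho>)
              (interior (Omega N)) (Se, Ee, Ie)"
  unfolding Let_def seir_field_eq_seir_rhs
  using seir_equilibrium.globally_asymptotically_stable_in_open_orthant[OF
      seir_endemic_equilibrium[OF assms(1-6,8,9)]]
  by (rule globally_asymptotically_stable_in_subset[OF _ interior_Omega_subset_open_orthant])

end
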